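(* Let $X$ be a topological space in which every $\Lambda$-set is a $G_\delta$-set, and suppose that for each pair of disjoint $F_\sigma$-sets $F_0,F_1$ in $X$ there exist $G_\delta$-sets $G_0,G_1$ with $F_0\subseteq G_0$, $F_1\subseteq G_1$ and $G_0\cap G_1=\varnothing$. Let $g,f:X\to\mathbb{R}$ be functions such that $f$ is lower semi-Baire-one, $g$ is upper semi-Baire-one, and $f\le g$. Then there exists a Baire-one function $h:X\to\mathbb{R}$ such that $f\le h\le g$.
   Context: A $\Lambda$-set in $X$ is an intersection of open sets. A function $f:X\to\mathbb{R}$ is upper semi-Baire-one (resp. lower semi-Baire-one) if $f^{-1}(-\infty,t)$ (resp. $f^{-1}(t,+\infty)$) is an $F_\sigma$-set in $X$ for every real $t$. A function $h:X\to\mathbb{R}$ is Baire-one if the preimage of every open subset of $\mathbb{R}$ is an $F_\sigma$-set in $X$. $f\le g$ means $f(x)\le g(x)$ for all $x\in X$. *)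

theory Defs
  imports "HOL-Analysis.Analysis"
begin

definition lambda_set_in :: "'a topology \<Rightarrow> 'a set \<Rightarrow> bool" where
  "lambda_set_in X S \<equiv> (\<exists>\<U>. (\<forall>U\<in>\<U>. openin X U) \<and> S = topspace X \<inter> \<Inter>\<U>)"

definition upper_semi_baire_one :: "'a topology \<Rightarrow> ('a \<Rightarrow> real) \<Rightarrow> bool" where
  "upper_semi_baire_one X f \<equiv> (\<forall>t. fsigma_in X {x \<in> topspace X. f x < t})"

definition lower_semi_baire_one :: "'a topology \<Rightarrow> ('a \<Rightarrow> real) \<Rightarrow> bool" where
  "lower_semi_baire_one X f \<equiv> (\<forall>t. fsigma_in X {x \<in> topspace X. f x > t})"

definition baire_one :: "'a topology \<Rightarrow> ('a \<Rightarrow> real) \<Rightarrow> bool" where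
  "baire_one X h \<equiv> (\<forall>U. open U \<longrightarrow> fsigma_in X {x \<in> topspace X. h x \<in> U})"

end

theory Submission
  imports Defs
begin

text \<open>For each real \<open>t\<close> let \<open>C t\<close> be the \<open>\<Lambda>\<close>-hull of \<open>{f > t}\<close>, the intersection of all open
  sets containing it. It is a \<open>G\<^sub>\<delta>\<close>-set by the first hypothesis, and also an \<open>F\<^sub>\<sigma>\<close>-set:
  separating \<open>{f > t}\<close> from the complement of \<open>C t\<close> by disjoint \<open>G\<^sub>\<delta>\<close>-sets \<open>G\<^sub>0\<close>, \<open>G\<^sub>1\<close>, minimality
  of the hull forces \<open>C t \<subseteq> G\<^sub>0\<close>, so \<open>C t\<close> is the complement of \<open>G\<^sub>1\<close>. Since \<open>{g \<ge> t}\<close> is a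
  \<open>G\<^sub>\<delta>\<close>-set containing \<open>{f > t}\<close>, also \<open>C t \<subseteq> {g \<ge> t}\<close>. Put \<open>h x = sup {t. x \<in> C t}\<close>; then
  \<open>f \<le> h \<le> g\<close>, \<open>{h > s}\<close> is a union of sets \<open>C t\<close> and \<open>{h < s}\<close> a union of their complements.
  Under the first hypothesis arbitrary unions of \<open>F\<^sub>\<sigma>\<close>-sets are \<open>F\<^sub>\<sigma>\<close>, because the complement of
  such a union is an intersection of \<open>G\<^sub>\<delta>\<close>-sets, hence a \<open>\<Lambda>\<close>-set. So \<open>h\<close> is lower and upper
  semi-Baire-one, hence Baire-one.\<close>

definition lambda_hull :: "'a topology \<Rightarrow> 'a set \<Rightarrow> 'a set" where
  "lambda_hull X A = topspace X \<inter> \<Inter>{U. openin X U \<and> A \<subseteq> U}"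

lemma lambda_set_in_lambda_hull: "lambda_set_in X (lambda_hull X A)"
  unfolding lambda_set_in_def lambda_hull_def
  by (rule exI[of _ "{U. openin X U \<and> A \<subseteq> U}"]) simp

lemma lambda_hull_subset_topspace: "lambda_hull X A \<subseteq> topspace X"
  by (auto simp: lambda_hull_def)

lemma subset_lambda_hull: "A \<subseteq> topspace X \<Longrightarrow> A \<subseteq> lambda_hull X A"
  by (auto simp: lambda_hull_def)

lemma lambda_hull_mono: "A \<subseteq> B \<Longrightarrow> lambda_hull X A \<subseteq> lambda_hull X B"
  by (auto simp: lambda_hull_def)

lemma lambda_hull_minimal:
  assumes "lambda_set_in X S" "A \<subseteq> S"
  shows "lambda_hull X A \<subseteq> S"
proof -
  obtain \<U> where "\<forall>U\<in>\<U>. openin X U" "S = topspace X \<inter> \<Inter>\<U>"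
    using assms(1) unfolding lambda_set_in_def by blast
  then show ?thesis
    using assms(2) unfolding lambda_hull_def by blast
qed

lemma lambda_set_in_Inter:
  assumes "\<And>S. S \<in> \<S> \<Longrightarrow> lambda_set_in X S"
  shows "lambda_set_in X (topspace X \<inter> \<Inter>\<S>)"
proof -
  have "\<forall>S\<in>\<S>. \<exists>\<U>. (\<forall>U\<in>\<U>. openin X U) \<and> S = topspace X \<inter> \<Inter>\<U>"
    using assms unfolding lambda_set_in_def by blast
  then obtain \<U> where \<U>: "\<And>S. S \<in> \<S> \<Longrightarrow> (\<forall>U\<in>\<U> S. openin X U) \<and> S = topspace X \<inter> \<Inter>(\<U> S)"
    by metis
  have "topspace X \<inter> \<Inter>\<S> = topspace X \<inter> \<Inter>(\<Union>(\<U> ` \<S>))"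
  proof -
    have "x \<in> S \<longleftrightarrow> (\<forall>U\<in>\<U> S. x \<in> U)" if "x \<in> topspace X" "S \<in> \<S>" for x S
      using \<U>[OF that(2)] that(1) by blast
    then show ?thesis
      by auto
  qed
  moreover have "\<forall>U\<in>\<Union>(\<U> ` \<S>). openin X U"
    using \<U> by blast
  ultimately show ?thesis
    unfolding lambda_set_in_def by blast
qed

lemma gdelta_in_imp_lambda_set_in: "gdelta_in X S \<Longrightarrow> lambda_set_in X S"
  unfolding gdelta_in_alt lambda_set_in_def intersection_of_def by blast

lemma fsigma_in_Union_if_lambda_sets_gdelta:
  assumes lambda_gdelta: "\<And>S. lambda_set_in X S \<Longrightarrow> gdelta_in X S"
    and fsigma: "\<And>S. S \<in> \<F> \<Longrightarrow> fsigma_in X S"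
  shows "fsigma_in X (\<Union>\<F>)"
proof -
  have "lambda_set_in X (topspace X \<inter> \<Inter>((-) (topspace X) ` \<F>))"
    using fsigma by (intro lambda_set_in_Inter) (auto simp: fsigma_in_gdelta_in gdelta_in_imp_lambda_set_in)
  moreover have "topspace X \<inter> \<Inter>((-) (topspace X) ` \<F>) = topspace X - \<Union>\<F>"
    by blast
  ultimately have "gdelta_in X (topspace X - \<Union>\<F>)"
    using lambda_gdelta by metis
  moreover have "\<Union>\<F> \<subseteq> topspace X"
    using fsigma fsigma_in_subset by blast
  ultimately show ?thesis
    by (simp add: fsigma_in_gdelta_in)
qed

lemma fsigma_in_lambda_hull:
  assumes lambda_gdelta: "\<And>S. lambda_set_in X S \<Longrightarrow> gdelta_in X S"
    and separation: "\<And>F0 F1. \<lbrakk>fsigma_in X F0; fsigma_in X F1; F0 \<inter> F1 = {}\<rbrakk> \<Longrightarrow>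
           \<exists>G0 G1. gdelta_in X G0 \<and> gdelta_in X G1 \<and> F0 \<subseteq> G0 \<and> F1 \<subseteq> G1 \<and> G0 \<inter> G1 = {}"
    and A: "fsigma_in X A"
  shows "fsigma_in X (lambda_hull X A)"
proof -
  let ?C = "lambda_hull X A"
  have "A \<subseteq> ?C"
    using fsigma_in_subset[OF A] by (rule subset_lambda_hull)
  then have disjoint: "A \<inter> (topspace X - ?C) = {}"
    by blast
  have "gdelta_in X ?C"
    using lambda_gdelta lambda_set_in_lambda_hull by blast
  then have "fsigma_in X (topspace X - ?C)"
    by (simp add: gdelta_in_fsigma_in)
  then obtain G0 G1 where G: "gdelta_in X G0" "gdelta_in X G1" "A \<subseteq> G0"
      "topspace X - ?C \<subseteq> G1" "G0 \<inter> G1 = {}"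
    using separation[OF A _ disjoint] by blast
  have "?C \<subseteq> G0"
    using G(1,3) by (intro lambda_hull_minimal gdelta_in_imp_lambda_set_in)
  then have "?C = topspace X - G1"
    using G(4,5) lambda_hull_subset_topspace[of X A] by blast
  then show ?thesis
    using G(2) by (simp add: gdelta_in_fsigma_in)
qed

lemma baire_one_if_semi_baire_one:
  assumes "lower_semi_baire_one X h" "upper_semi_baire_one X h"
  shows "baire_one X h"
  unfolding baire_one_def
proof (intro allI impI)
  fix U :: "real set"
  assume "open U"
  then obtain \<D> where \<D>: "countable \<D>" "\<D> \<subseteq> Pow U" "\<And>D. D \<in> \<D> \<Longrightarrow> \<exists>a b. D = box a b" "\<Union>\<D> = U"
    by (erule open_countable_Union_open_box)
  have "fsigma_in X {x \<in> topspace X. h x \<in> D}" if "D \<in> \<D>" for D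
  proof -
    obtain a b where "D = {a<..<b}"
      using \<D>(3) \<open>D \<in> \<D>\<close> box_real(1) by blast
    then have "{x \<in> topspace X. h x \<in> D} = {x \<in> topspace X. h x > a} \<inter> {x \<in> topspace X. h x < b}"
      by auto
    then show ?thesis
      using assms by (simp add: fsigma_in_Int lower_semi_baire_one_def upper_semi_baire_one_def)
  qed
  moreover have "{x \<in> topspace X. h x \<in> U} = (\<Union>D\<in>\<D>. {x \<in> topspace X. h x \<in> D})"
    using \<D>(4) by blast
  ultimately show "fsigma_in X {x \<in> topspace X. h x \<in> U}"
    using \<D>(1) by (metis (no_types, lifting) countable_image fsigma_in_Union imageE)
qed

lemma gdelta_in_upper_semi_baire_one_ge:
  assumes "upper_semi_baire_one X g"
  shows "gdelta_in X {x \<in> topspace X. g x \<ge> t}"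
proof -
  have "gdelta_in X (topspace X - {x \<in> topspace X. g x < t})"
    using assms unfolding upper_semi_baire_one_def by (simp add: gdelta_in_diff)
  moreover have "topspace X - {x \<in> topspace X. g x < t} = {x \<in> topspace X. g x \<ge> t}"
    by auto
  ultimately show ?thesis
    by simp
qed

definition level_sup :: "(real \<Rightarrow> 'a set) \<Rightarrow> 'a \<Rightarrow> real" where
  "level_sup C x = Sup {t. x \<in> C t}"

context
  fixes X :: "'a topology" and C :: "real \<Rightarrow> 'a set" and f g :: "'a \<Rightarrow> real"
  assumes C_antimono: "antimono C"
    and C_lower: "\<And>t. {x \<in> topspace X. f x > t} \<subseteq> C t"
    and C_upper: "\<And>t. C t \<subseteq> {x \<in> topspace X. g x \<ge> t}"
begin

lemma level_sup_ge:
  assumes "x \<in> C t"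
  shows "t \<le> level_sup C x"
  unfolding level_sup_def
  by (rule cSup_upper) (use assms C_upper in \<open>auto simp: bdd_above_def\<close>)

lemma level_sup_le:
  assumes "x \<in> topspace X" "\<And>t. x \<in> C t \<Longrightarrow> t \<le> s"
  shows "level_sup C x \<le> s"
  unfolding level_sup_def
  by (rule cSup_least) (use assms C_lower[of "f x - 1"] in auto)

lemma level_sup_between:
  assumes "x \<in> topspace X"
  shows "f x \<le> level_sup C x" "level_sup C x \<le> g x"
proof -
  show "f x \<le> level_sup C x"
    by (rule dense_le) (use assms C_lower level_sup_ge in blast)
  show "level_sup C x \<le> g x"
    using assms C_upper by (intro level_sup_le) auto
qed

lemma superlevel_set_level_sup: "{x \<in> topspace X. level_sup C x > s} = \<Union>(C ` {s<..})"
proof (intro set_eqI iffI)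
  fix x
  assume "x \<in> {x \<in> topspace X. level_sup C x > s}"
  then have "\<not> level_sup C x \<le> s" "x \<in> topspace X"
    by auto
  then show "x \<in> \<Union>(C ` {s<..})"
    using level_sup_le by force
next
  fix x
  assume "x \<in> \<Union>(C ` {s<..})"
  then show "x \<in> {x \<in> topspace X. level_sup C x > s}"
    using C_upper level_sup_ge by fastforce
qed

lemma sublevel_set_level_sup: "{x \<in> topspace X. level_sup C x < s} = (\<Union>r\<in>{..<s}. topspace X - C r)"
proof (intro set_eqI iffI)
  fix x
  assume x: "x \<in> {x \<in> topspace X. level_sup C x < s}"
  define r where "r = (level_sup C x + s) / 2"
  have "x \<notin> C r" "r < s"
    using x level_sup_ge unfolding r_def by force+
  then show "x \<in> (\<Union>r\<in>{..<s}. topspace X - C r)"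
    using x by blast
next
  fix x
  assume "x \<in> (\<Union>r\<in>{..<s}. topspace X - C r)"
  then obtain r where r: "x \<in> topspace X" "x \<notin> C r" "r < s"
    by blast
  have "t \<le> r" if "x \<in> C t" for t
  proof (rule ccontr)
    assume "\<not> t \<le> r"
    then have "C t \<subseteq> C r"
      using C_antimono by (simp add: antimonoD)
    then show False
      using that r(2) by blast
  qed
  with r(1) have "level_sup C x \<le> r"
    by (rule level_sup_le)
  with r show "x \<in> {x \<in> topspace X. level_sup C x < s}"
    by auto
qed

lemma baire_one_level_sup:
  assumes lambda_gdelta: "\<And>S. lambda_set_in X S \<Longrightarrow> gdelta_in X S"
    and "\<And>t. fsigma_in X (C t)" "\<And>t. gdelta_in X (C t)"
  shows "baire_one X (level_sup C)"
proof (rule baire_one_if_semi_baire_one)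
  show "lower_semi_baire_one X (level_sup C)"
    unfolding lower_semi_baire_one_def superlevel_set_level_sup using lambda_gdelta
    by (intro allI, rule fsigma_in_Union_if_lambda_sets_gdelta) (auto simp: assms(2))
  show "upper_semi_baire_one X (level_sup C)"
    unfolding upper_semi_baire_one_def sublevel_set_level_sup using lambda_gdelta
    by (intro allI, rule fsigma_in_Union_if_lambda_sets_gdelta) (use assms(3) in \<open>auto simp: gdelta_in_fsigma_in\<close>)
qed

end

theorem corollary4:
  fixes X :: "'a topology" and f g :: "'a \<Rightarrow> real"
  assumes "\<And>S. lambda_set_in X S \<Longrightarrow> gdelta_in X S"
    and "\<And>F0 F1. \<lbrakk>fsigma_in X F0; fsigma_in X F1; F0 \<inter> F1 = {}\<rbrakk> \<Longrightarrow>
           \<exists>G0 G1. gdelta_in X G0 \<and> gdelta_in X G1 \<and> F0 \<subseteq> G0 \<and> F1 \<subseteq> G1 \<and> G0 \<inter> G1 = {}"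
    and "lower_semi_baire_one X f"
    and "upper_semi_baire_one X g"
    and "\<And>x. x \<in> topspace X \<Longrightarrow> f x \<le> g x"
  shows "\<exists>h. baire_one X h \<and> (\<forall>x\<in>topspace X. f x \<le> h x \<and> h x \<le> g x)"
proof -
  note lambda_gdelta = assms(1) and separation = assms(2)
  define C where "C t = lambda_hull X {x \<in> topspace X. f x > t}" for t
  have C_antimono: "antimono C"
    unfolding C_def by (intro antimonoI lambda_hull_mono) auto
  have C_lower: "{x \<in> topspace X. f x > t} \<subseteq> C t" for t
    unfolding C_def by (intro subset_lambda_hull) auto
  have C_upper: "C t \<subseteq> {x \<in> topspace X. g x \<ge> t}" for t
    unfolding C_def using assms(5) gdelta_in_upper_semi_baire_one_ge[OF assms(4)]
    by (intro lambda_hull_minimal gdelta_in_imp_lambda_set_in) force+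
  have "fsigma_in X {x \<in> topspace X. f x > t}" for t
    using assms(3) unfolding lower_semi_baire_one_def by blast
  then have C_fsigma: "fsigma_in X (C t)" for t
    unfolding C_def using lambda_gdelta separation by (intro fsigma_in_lambda_hull)
  have C_gdelta: "gdelta_in X (C t)" for t
    unfolding C_def using lambda_gdelta lambda_set_in_lambda_hull by blast
  have "baire_one X (level_sup C)"
    using C_antimono C_lower C_upper lambda_gdelta C_fsigma C_gdelta by (rule baire_one_level_sup)
  then show ?thesis
    using level_sup_between[OF C_antimono C_lower C_upper] by blast
qed

end
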